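(* Let $\alpha\in(\tfrac12,1)$, $z=(t',x')\in\mathbb{R}\times\mathbb{R}^d$, and let $f:\mathbb{R}\times\mathbb{R}^d\to\mathbb{R}$ be spatially differentiable with $[\nabla f]_\alpha<\infty$ (and such that the spatially mollified functions below are differentiable in time). Then $$\sup_{r>0}\frac{1}{r^{2\alpha}}\inf_{B,b}\|\nabla f-B_{x'}\|_{P_r(z)}\le C\Big(\sup_{l>0}\frac{1}{l^{2\alpha}}\sup_{|y|\le l}\inf_{k\in\mathbb{R}^d}\|\nabla\delta_yf-k\|_{P_l(z)}+\sum_{i=0}^d\sup_{r>0}r^{1-2\alpha}\sup_{|y|\le r}\big\|\partial_t(\delta_yf)_{r,i}\big\|_{P_r(z)}\Big),$$ where the infimum is over symmetric $B\in\mathbb{R}^{d\times d}$ and $b\in\mathbb{R}^d$, $B_{x'}(x):=B(x-x')+b$, and $C$ depends only on $d$ and $\alpha$.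
   Context: Metric $d((t,x),(t',x'))=|t-t'|^{1/2}+|x-x'|$, $[f]_\alpha:=\sup_{z\ne z'}|f(z)-f(z')|/d^\alpha(z,z')$. $P_r(z):=(t'-r^2,t')\times B_r(x')$ is the parabolic cylinder, $\|\cdot\|_{P_r(z)}$ the supremum norm over it. $\delta_yf(t,x):=f(t,x+y)-f(t,x)$. $\psi$ is a fixed smooth, nonnegative, radially symmetric mollifier on $\mathbb{R}^d$ with $\operatorname{supp}\psi\subset B_1(0)$ and $\int\psi=1$; $\psi_r(x):=r^{-d}\psi(x/r)$. For a function $g$ on $\mathbb{R}\times\mathbb{R}^d$, convolution is in space only: $g_{r,0}:=g*\psi_r$ and $g_{r,i}:=g*(\partial_i\psi)_r$ for $i=1,\dots,d$, where $(\partial_i\psi)_r(x)=r^{-d}(\partial_i\psi)(x/r)$. *)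

theory Defs
  imports "HOL-Analysis.Analysis"
begin

definition pdist :: "real \<times> (real^'n) \<Rightarrow> real \<times> (real^'n) \<Rightarrow> real" where
  "pdist z w = sqrt \<bar>fst z - fst w\<bar> + norm (snd z - snd w)"

definition Pcyl :: "real \<Rightarrow> real \<times> (real^'n) \<Rightarrow> (real \<times> (real^'n)) set" where
  "Pcyl r z = {(s, y). fst z - r\<^sup>2 < s \<and> s < fst z \<and> dist y (snd z) < r}"

definition supn :: "('a \<Rightarrow> 'b::real_normed_vector) \<Rightarrow> 'a set \<Rightarrow> ereal" where
  "supn g S = (SUP p\<in>S. ereal (norm (g p)))"

definition pder :: "(real^'n \<Rightarrow> real) \<Rightarrow> 'n \<Rightarrow> real^'n \<Rightarrow> real" where
  "pder g i x = frechet_derivative g (at x) (axis i 1)"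

definition grad :: "(real^'n \<Rightarrow> real) \<Rightarrow> real^'n \<Rightarrow> real^'n" where
  "grad g x = (\<chi> i. pder g i x)"

fun iter_pder :: "'n list \<Rightarrow> (real^'n \<Rightarrow> real) \<Rightarrow> real^'n \<Rightarrow> real" where
  "iter_pder [] g = g"
| "iter_pder (i # is) g = pder (iter_pder is g) i"

definition smooth_fun :: "(real^'n \<Rightarrow> real) \<Rightarrow> bool" where
  "smooth_fun g \<longleftrightarrow> (\<forall>is x. iter_pder is g differentiable (at x))"

definition mollifier :: "(real^'n \<Rightarrow> real) \<Rightarrow> bool" where
  "mollifier \<psi> \<longleftrightarrow> smooth_fun \<psi> \<and> (\<forall>x. 0 \<le> \<psi> x)
     \<and> (\<forall>x y. norm x = norm y \<longrightarrow> \<psi> x = \<psi> y)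
     \<and> closure {x. \<psi> x \<noteq> 0} \<subseteq> ball 0 1
     \<and> \<psi> integrable_on UNIV \<and> integral UNIV \<psi> = 1"

definition sdelta :: "real^'n \<Rightarrow> (real \<Rightarrow> real^'n \<Rightarrow> real) \<Rightarrow> real \<Rightarrow> real^'n \<Rightarrow> real" where
  "sdelta y f t x = f t (x + y) - f t x"

definition rescale :: "real \<Rightarrow> (real^'n \<Rightarrow> real) \<Rightarrow> real^'n \<Rightarrow> real" where
  "rescale r \<phi> x = inverse r ^ CARD('n) * \<phi> (inverse r *\<^sub>R x)"

definition sconv :: "(real \<Rightarrow> real^'n \<Rightarrow> real) \<Rightarrow> (real^'n \<Rightarrow> real) \<Rightarrow> real \<Rightarrow> real^'n \<Rightarrow> real" where
  "sconv g \<phi> t x = integral UNIV (\<lambda>w. g t (x - w) * \<phi> w)"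

text \<open>g_{r,0} = g * psi_r and g_{r,i} = g * (partial_i psi)_r.\<close>
definition moll0 :: "(real^'n \<Rightarrow> real) \<Rightarrow> real \<Rightarrow> (real \<Rightarrow> real^'n \<Rightarrow> real) \<Rightarrow> real \<Rightarrow> real^'n \<Rightarrow> real" where
  "moll0 \<psi> r g = sconv g (rescale r \<psi>)"

definition molli :: "(real^'n \<Rightarrow> real) \<Rightarrow> 'n \<Rightarrow> real \<Rightarrow> (real \<Rightarrow> real^'n \<Rightarrow> real) \<Rightarrow> real \<Rightarrow> real^'n \<Rightarrow> real" where
  "molli \<psi> i r g = sconv g (rescale r (pder \<psi> i))"

end

theory Submission
  imports Defs
begin

text \<open>
  Let \<open>A1\<close> be the seminorm of the increments \<open>\<nabla>\<delta>\<^sub>yf\<close> and \<open>A0\<close> that of the time derivatives of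
  the mollified increments \<open>(\<delta>\<^sub>yf)\<^sub>r\<^sub>,\<^sub>0\<close>. The first bounds the second differences
  \<open>\<nabla>f(s,a+y) - \<nabla>f(s,a) - \<nabla>f(s,b+y) + \<nabla>f(s,b)\<close> on \<open>P\<^sub>l(z)\<close> by \<open>2 A1 l^(2\<alpha>)\<close>. At a fixed
  time \<open>s0\<close> this alone yields an affine approximation of \<open>\<nabla>f(s0,\<cdot>)\<close> on \<open>B\<^sub>r(x')\<close>: take for \<open>B\<close>
  the matrix of centred second difference quotients of \<open>f(s0,\<cdot>)\<close> at scale \<open>r\<close> and estimate the
  error by central and mixed differences along segments.

  To reach the other times \<open>s\<close>, let \<open>D = f(s,\<cdot>) - f(s0,\<cdot>)\<close>. The time difference of the
  mollified increment \<open>(\<delta>\<^sub>yf)\<^sub>2\<^sub>r\<^sub>,\<^sub>0(\<cdot>,x')\<close> is \<open>O(A0 r^(1+2\<alpha>))\<close>; as the kernel is even, it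
  differs from \<open>\<delta>\<^sub>yD(x')\<close> only by a symmetric second difference of \<open>\<delta>\<^sub>yD\<close>, which is
  \<open>O(A1 r^(1+2\<alpha>))\<close>. A function this flat on \<open>B\<^sub>2\<^sub>r(x')\<close> whose gradient has small second
  differences has gradient \<open>O(r^(2\<alpha>))\<close> on \<open>B\<^sub>r(x')\<close>, so the affine map fitted at \<open>s0\<close> serves on
  all of \<open>P\<^sub>r(z)\<close>.
\<close>

lemma grad_eqI:
  fixes g :: "real^'n \<Rightarrow> real"
  assumes "(g has_derivative (\<lambda>v. a \<bullet> v)) (at x)"
  shows "grad g x = a"
proof -
  have "frechet_derivative g (at x) = (\<lambda>v. a \<bullet> v)"
    using frechet_derivative_at[OF assms] by simp
  then show ?thesis
    unfolding grad_def pder_def by (simp add: vec_eq_iff inner_axis)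
qed

lemma has_derivative_grad:
  fixes g :: "real^'n \<Rightarrow> real"
  assumes "g differentiable (at x)"
  shows "(g has_derivative (\<lambda>v. grad g x \<bullet> v)) (at x)"
proof -
  let ?D = "frechet_derivative g (at x)"
  have D: "(g has_derivative ?D) (at x)"
    using assms frechet_derivative_works by blast
  then have lin: "linear ?D"
    using has_derivative_linear by blast
  have "?D v = grad g x \<bullet> v" for v
  proof -
    have "?D v = ?D (\<Sum>i\<in>UNIV. (v$i) *\<^sub>R axis i 1)"
      using basis_expansion[of v] by (simp add: scalar_mult_eq_scaleR)
    also have "\<dots> = (\<Sum>i\<in>UNIV. (v$i) * ?D (axis i 1))"
      by (simp add: linear_sum[OF lin] linear_scale[OF lin])
    also have "\<dots> = grad g x \<bullet> v"
      by (simp add: grad_def pder_def inner_vec_def mult.commute)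
    finally show ?thesis .
  qed
  with D show ?thesis
    by (metis (no_types, lifting) ext)
qed

lemma has_derivative_shift_diff:
  fixes F :: "real^'n \<Rightarrow> real"
  assumes "\<And>z. (F has_derivative (\<lambda>v. Gr z \<bullet> v)) (at z)"
  shows "((\<lambda>z. F (z + y) - F z) has_derivative (\<lambda>v. (Gr (z + y) - Gr z) \<bullet> v)) (at z)"
proof -
  have "((\<lambda>x. x + y) has_derivative (\<lambda>v. v)) (at z)"
    by (auto intro!: derivative_eq_intros)
  from has_derivative_compose[OF this assms]
  have "((\<lambda>x. F (x + y)) has_derivative (\<lambda>v. Gr (z + y) \<bullet> v)) (at z)"
    by simp
  from has_derivative_diff[OF this assms] show ?thesis
    by (simp add: inner_diff_left)
qed

lemma grad_sdelta:
  assumes "\<And>x. f t differentiable (at x)"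
  shows "grad (sdelta y f t) x = grad (f t) (x + y) - grad (f t) x"
proof -
  have "((\<lambda>x. f t (x + y) - f t x) has_derivative
      (\<lambda>v. (grad (f t) (x + y) - grad (f t) x) \<bullet> v)) (at x)"
    by (rule has_derivative_shift_diff[OF has_derivative_grad[OF assms]])
  then show ?thesis
    unfolding sdelta_def[abs_def] by (rule grad_eqI)
qed

lemma has_real_derivative_along_line:
  fixes F :: "real^'n \<Rightarrow> real"
  assumes "\<And>z. (F has_derivative (\<lambda>v. Gr z \<bullet> v)) (at z)"
  shows "((\<lambda>t. F (a + t *\<^sub>R e)) has_real_derivative (Gr (a + t *\<^sub>R e) \<bullet> e)) (at t)"
proof -
  have "((\<lambda>t. a + t *\<^sub>R e) has_derivative (\<lambda>s. s *\<^sub>R e)) (at t)"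
    by (auto intro!: derivative_eq_intros)
  from has_derivative_compose[OF this assms]
  have "((\<lambda>t. F (a + t *\<^sub>R e)) has_derivative (\<lambda>s. s * (Gr (a + t *\<^sub>R e) \<bullet> e))) (at t)"
    by simp
  then show ?thesis
    unfolding has_field_derivative_def by (rule has_derivative_eq_rhs) (simp add: fun_eq_iff)
qed

lemma abs_diff_le_deriv_bound:
  fixes \<phi> \<phi>' :: "real \<Rightarrow> real"
  assumes "a \<le> b" and "\<And>t. t \<in> {a..b} \<Longrightarrow> (\<phi> has_real_derivative \<phi>' t) (at t)"
    and "\<And>t. t \<in> {a..b} \<Longrightarrow> \<bar>\<phi>' t\<bar> \<le> K"
  shows "\<bar>\<phi> b - \<phi> a\<bar> \<le> K * (b - a)"
proof -
  have "norm (\<phi> b - \<phi> a) \<le> K * norm (b - a)"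
    by (rule field_differentiable_bound[of "{a..b}" \<phi> \<phi>'])
       (use assms in \<open>auto intro: has_field_derivative_at_within\<close>)
  then show ?thesis
    using assms(1) by simp
qed

lemma abs_diff_le_deriv_bound_inner:
  fixes \<phi> :: "real \<Rightarrow> real"
  assumes "0 \<le> h" and "\<And>t. (\<phi> has_real_derivative (W t \<bullet> e)) (at t)"
    and "\<And>t. t \<in> {0..h} \<Longrightarrow> norm (W t) \<le> K"
  shows "\<bar>\<phi> h - \<phi> 0\<bar> \<le> K * norm e * h"
proof -
  have "\<bar>W t \<bullet> e\<bar> \<le> K * norm e" if "t \<in> {0..h}" for t
    using Cauchy_Schwarz_ineq2[of "W t" e] assms(3)[OF that]
    by (meson order_trans mult_right_mono norm_ge_zero)
  from abs_diff_le_deriv_bound[OF assms(1) assms(2) this] show ?thesis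
    by simp
qed

lemma central_difference_bound:
  fixes F :: "real^'n \<Rightarrow> real"
  assumes dF: "\<And>z. (F has_derivative (\<lambda>v. Gr z \<bullet> v)) (at z)" and "0 \<le> h"
    and "\<And>t. t \<in> {0..h} \<Longrightarrow> norm (Gr (x + t *\<^sub>R e) + Gr (x - t *\<^sub>R e) - 2 *\<^sub>R Gr x) \<le> K"
  shows "\<bar>F (x + h *\<^sub>R e) - F (x - h *\<^sub>R e) - 2 * h * (Gr x \<bullet> e)\<bar> \<le> K * norm e * h"
proof -
  define \<phi> where "\<phi> t = F (x + t *\<^sub>R e) - F (x + t *\<^sub>R (-e)) - 2 * t * (Gr x \<bullet> e)" for t
  have "(\<phi> has_real_derivative ((Gr (x + t *\<^sub>R e) + Gr (x - t *\<^sub>R e) - 2 *\<^sub>R Gr x) \<bullet> e)) (at t)" for t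
  proof -
    have "((\<lambda>t. 2 * t * (Gr x \<bullet> e)) has_real_derivative 2 * (Gr x \<bullet> e)) (at t)"
      by (auto intro!: derivative_eq_intros)
    then have "(\<phi> has_real_derivative (Gr (x + t *\<^sub>R e) \<bullet> e - Gr (x + t *\<^sub>R (-e)) \<bullet> (-e) - 2 * (Gr x \<bullet> e))) (at t)"
      unfolding \<phi>_def by (intro DERIV_diff has_real_derivative_along_line[OF dF])
    then show ?thesis
      by (simp add: inner_diff_left inner_add_left algebra_simps)
  qed
  from abs_diff_le_deriv_bound_inner[OF assms(2) this assms(3)] show ?thesis
    by (simp add: \<phi>_def)
qed

lemma symmetric_difference_bound:
  fixes F :: "real^'n \<Rightarrow> real"
  assumes dF: "\<And>z. (F has_derivative (\<lambda>v. Gr z \<bullet> v)) (at z)"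
    and "\<And>t. t \<in> {0..1} \<Longrightarrow> norm (Gr (x + t *\<^sub>R w) - Gr (x - t *\<^sub>R w)) \<le> K"
  shows "\<bar>F (x + w) + F (x - w) - 2 * F x\<bar> \<le> K * norm w"
proof -
  define \<phi> where "\<phi> t = F (x + t *\<^sub>R w) + F (x + t *\<^sub>R (-w)) - 2 * F x" for t
  have "(\<phi> has_real_derivative ((Gr (x + t *\<^sub>R w) - Gr (x - t *\<^sub>R w)) \<bullet> w)) (at t)" for t
  proof -
    have "(\<phi> has_real_derivative (Gr (x + t *\<^sub>R w) \<bullet> w + Gr (x + t *\<^sub>R (-w)) \<bullet> (-w) - 0)) (at t)"
      unfolding \<phi>_def
      by (intro DERIV_diff DERIV_add has_real_derivative_along_line[OF dF] DERIV_const)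
    then show ?thesis
      by (simp add: inner_diff_left algebra_simps)
  qed
  from abs_diff_le_deriv_bound_inner[OF zero_le_one this assms(2)] show ?thesis
    by (simp add: \<phi>_def)
qed

lemma mixed_difference_bound:
  fixes F :: "real^'n \<Rightarrow> real"
  assumes dF: "\<And>z. (F has_derivative (\<lambda>v. Gr z \<bullet> v)) (at z)"
    and "\<And>t. t \<in> {0..1} \<Longrightarrow> norm (Gr (p + t *\<^sub>R v) - Gr (q + t *\<^sub>R v) - (Gr p - Gr q)) \<le> K"
  shows "\<bar>F (p + v) - F (q + v) - F p + F q - (Gr p - Gr q) \<bullet> v\<bar> \<le> K * norm v"
proof -
  define \<phi> where "\<phi> t = F (p + t *\<^sub>R v) - F (q + t *\<^sub>R v) - t * ((Gr p - Gr q) \<bullet> v)" for t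
  have "(\<phi> has_real_derivative ((Gr (p + t *\<^sub>R v) - Gr (q + t *\<^sub>R v) - (Gr p - Gr q)) \<bullet> v)) (at t)" for t
  proof -
    have "((\<lambda>t. t * ((Gr p - Gr q) \<bullet> v)) has_real_derivative (Gr p - Gr q) \<bullet> v) (at t)"
      by (auto intro!: derivative_eq_intros)
    then have "(\<phi> has_real_derivative (Gr (p + t *\<^sub>R v) \<bullet> v - Gr (q + t *\<^sub>R v) \<bullet> v - (Gr p - Gr q) \<bullet> v)) (at t)"
      unfolding \<phi>_def by (intro DERIV_diff has_real_derivative_along_line[OF dF])
    then show ?thesis
      by (simp add: inner_diff_left algebra_simps)
  qed
  from abs_diff_le_deriv_bound_inner[OF zero_le_one this assms(2)] show ?thesis
    by (simp add: \<phi>_def algebra_simps)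
qed

lemma mollifierD:
  assumes "mollifier \<psi>"
  shows mollifier_nonneg: "0 \<le> \<psi> x"
    and mollifier_even: "\<psi> (-x) = \<psi> x"
    and mollifier_support: "\<psi> x \<noteq> 0 \<Longrightarrow> norm x < 1"
    and mollifier_has_integral: "(\<psi> has_integral 1) UNIV"
    and mollifier_continuous: "continuous_on UNIV \<psi>"
proof -
  obtain smooth: "smooth_fun \<psi>" and nonneg: "\<forall>x. 0 \<le> \<psi> x"
    and radial: "\<forall>x y. norm x = norm y \<longrightarrow> \<psi> x = \<psi> y"
    and support: "closure {x. \<psi> x \<noteq> 0} \<subseteq> ball 0 1"
    and integrable: "\<psi> integrable_on UNIV" and integral: "integral UNIV \<psi> = 1"
    using assms unfolding mollifier_def by (elim conjE) (rule that)
  show "0 \<le> \<psi> x"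
    using nonneg by simp
  show "\<psi> (-x) = \<psi> x"
    using radial norm_minus_cancel by metis
  show "norm x < 1" if "\<psi> x \<noteq> 0"
  proof -
    have "x \<in> closure {x. \<psi> x \<noteq> 0}"
      by (rule closure_subset[THEN subsetD]) (simp add: that)
    from subsetD[OF support this] show ?thesis
      by simp
  qed
  show "(\<psi> has_integral 1) UNIV"
    using integrable integral integrable_integral by metis
  have "\<psi> differentiable (at x)" for x
    using smooth iter_pder.simps(1) unfolding smooth_fun_def by metis
  then show "continuous_on UNIV \<psi>"
    by (simp add: continuous_at_imp_continuous_on differentiable_imp_continuous_within)
qed

lemma has_integral_UNIV_iff_cube:
  fixes h :: "real^'n \<Rightarrow> real"
  assumes "\<And>w. h w \<noteq> 0 \<Longrightarrow> norm w < \<rho>"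
  shows "(h has_integral i) UNIV \<longleftrightarrow> (h has_integral i) (cbox (-(\<rho> *\<^sub>R One)) (\<rho> *\<^sub>R One))"
proof -
  have "norm w < \<rho> \<Longrightarrow> w \<in> cbox (-(\<rho> *\<^sub>R One)) (\<rho> *\<^sub>R One)" for w :: "real^'n"
  proof -
    assume "norm w < \<rho>"
    then have "\<bar>w \<bullet> b\<bar> \<le> \<rho>" if "b \<in> Basis" for b
      using Basis_le_norm[OF that, of w] by linarith
    then show ?thesis
      by (fastforce simp: mem_box abs_le_iff inner_minus_left minus_le_iff)
  qed
  then have "(\<lambda>x. if x \<in> cbox (-(\<rho> *\<^sub>R One)) (\<rho> *\<^sub>R One) then h x else 0) = h"
    using assms by fastforce
  then show ?thesis
    using has_integral_restrict_UNIV[of "cbox (-(\<rho> *\<^sub>R One)) (\<rho> *\<^sub>R One)" h i] by simp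
qed

lemma continuous_on_translate_reflect:
  fixes g :: "'a::real_normed_vector \<Rightarrow> 'b::topological_space"
  assumes "continuous_on UNIV g"
  shows "continuous_on UNIV (\<lambda>w. g (a + w))" and "continuous_on UNIV (\<lambda>w. g (a - w))"
  by (rule continuous_on_compose2[OF assms], intro continuous_intros, simp)+

context
  fixes \<psi> :: "real^'n \<Rightarrow> real" and \<rho> :: real
  assumes moll: "mollifier \<psi>" and rho: "0 < \<rho>"
begin

lemma rescale_continuous: "continuous_on UNIV (rescale \<rho> \<psi>)"
  unfolding rescale_def[abs_def]
  by (intro continuous_intros continuous_on_compose2[OF mollifier_continuous[OF moll]]) auto

lemma rescale_support: "rescale \<rho> \<psi> w \<noteq> 0 \<Longrightarrow> norm w < \<rho>"
  using mollifier_support[OF moll, of "inverse \<rho> *\<^sub>R w"] rho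
  by (simp add: rescale_def field_simps)

lemma rescale_nonneg: "0 \<le> rescale \<rho> \<psi> w"
  unfolding rescale_def using mollifier_nonneg[OF moll] rho by simp

lemma rescale_even: "rescale \<rho> \<psi> (-w) = rescale \<rho> \<psi> w"
  unfolding rescale_def by (simp add: mollifier_even[OF moll])

lemma rescale_has_integral: "(rescale \<rho> \<psi> has_integral 1) UNIV"
proof -
  have "(\<psi> has_integral 1) (cbox (-One) One)"
    using has_integral_UNIV_iff_cube[of \<psi> 1] mollifier_support[OF moll] mollifier_has_integral[OF moll]
    by simp
  from has_integral_affinity'[OF this, of "inverse \<rho>" 0]
  have "((\<lambda>x. \<psi> (inverse \<rho> *\<^sub>R x)) has_integral \<rho> ^ CARD('n)) (cbox (-(\<rho> *\<^sub>R One)) (\<rho> *\<^sub>R One))"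
    using rho by (simp add: power_inverse)
  from has_integral_mult_right[OF this, of "inverse \<rho> ^ CARD('n)"]
  have "(rescale \<rho> \<psi> has_integral 1) (cbox (-(\<rho> *\<^sub>R One)) (\<rho> *\<^sub>R One))"
    using rho by (simp add: rescale_def[abs_def] power_inverse field_simps)
  then show ?thesis
    using has_integral_UNIV_iff_cube[of "rescale \<rho> \<psi>" \<rho>] rescale_support by blast
qed

lemma integrable_mult_rescale:
  assumes "continuous_on UNIV g"
  shows "(\<lambda>w. g w * rescale \<rho> \<psi> w) integrable_on UNIV"
proof -
  let ?Q = "cbox (-(\<rho> *\<^sub>R One)) (\<rho> *\<^sub>R One) :: (real^'n) set"
  have "continuous_on ?Q (\<lambda>w. g w * rescale \<rho> \<psi> w)"
    using continuous_on_mult[OF assms rescale_continuous] continuous_on_subset by blast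
  then have "((\<lambda>w. g w * rescale \<rho> \<psi> w) has_integral integral ?Q (\<lambda>w. g w * rescale \<rho> \<psi> w)) ?Q"
    using integrable_continuous integrable_integral by blast
  then show ?thesis
    using has_integral_UNIV_iff_cube[of "\<lambda>w. g w * rescale \<rho> \<psi> w" \<rho>] rescale_support by auto
qed

lemma integral_mult_rescale_deviation:
  assumes "continuous_on UNIV g" and "\<And>w. norm w < \<rho> \<Longrightarrow> \<bar>g w - c\<bar> \<le> K"
  shows "\<bar>integral UNIV (\<lambda>w. g w * rescale \<rho> \<psi> w) - c\<bar> \<le> K"
proof -
  let ?\<phi> = "rescale \<rho> \<psi>"
  have int_c: "((\<lambda>w. c * ?\<phi> w) has_integral c) UNIV" and int_K: "((\<lambda>w. K * ?\<phi> w) has_integral K) UNIV"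
    using has_integral_mult_right[OF rescale_has_integral] by fastforce+
  have "((\<lambda>w. (g w - c) * ?\<phi> w) has_integral integral UNIV (\<lambda>w. g w * ?\<phi> w) - c) UNIV"
    using has_integral_diff[OF integrable_integral[OF integrable_mult_rescale[OF assms(1)]] int_c]
    by (simp add: left_diff_distrib)
  moreover have "\<bar>(g w - c) * ?\<phi> w\<bar> \<le> K * ?\<phi> w" for w
  proof (cases "?\<phi> w = 0")
    case False
    then have "\<bar>g w - c\<bar> * ?\<phi> w \<le> K * ?\<phi> w"
      by (intro mult_right_mono assms(2) rescale_support rescale_nonneg)
    then show ?thesis
      by (simp add: abs_mult abs_of_nonneg[OF rescale_nonneg])
  qed simp
  ultimately show ?thesis
    using has_integral_le[OF _ int_K] has_integral_le[OF has_integral_neg[OF int_K]]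
    by (smt (verit, ccfv_SIG) abs_le_D1 abs_le_D2)
qed

text \<open>The kernel is even, so only the even part of \<open>F\<close> about \<open>x\<close> survives the mollification.\<close>
lemma integral_mult_rescale_symmetric_difference:
  assumes "continuous_on UNIV F" and "\<And>w. norm w < \<rho> \<Longrightarrow> \<bar>F (x + w) + F (x - w) - 2 * F x\<bar> \<le> 2 * K"
  shows "\<bar>integral UNIV (\<lambda>w. F (x - w) * rescale \<rho> \<psi> w) - F x\<bar> \<le> K"
proof -
  let ?\<phi> = "rescale \<rho> \<psi>" and ?Q = "cbox (-(\<rho> *\<^sub>R One)) (\<rho> *\<^sub>R One) :: (real^'n) set"
  have support: "\<And>g. ((\<lambda>w. g w * ?\<phi> w) has_integral i) UNIV \<longleftrightarrow> ((\<lambda>w. g w * ?\<phi> w) has_integral i) ?Q" for i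
    by (rule has_integral_UNIV_iff_cube) (use rescale_support in auto)
  note cont_plus = continuous_on_translate_reflect(1)[OF assms(1), of x]
    and cont_minus = continuous_on_translate_reflect(2)[OF assms(1), of x]
  define I where "I = integral UNIV (\<lambda>w. F (x + w) * ?\<phi> w)"
  have plus: "((\<lambda>w. F (x + w) * ?\<phi> w) has_integral I) UNIV"
    unfolding I_def by (rule integrable_integral[OF integrable_mult_rescale[OF cont_plus]])
  then have "((\<lambda>w. F (x - w) * ?\<phi> (-w)) has_integral I) ?Q"
    using has_integral_reflect[of "\<lambda>w. F (x + w) * ?\<phi> w" I "\<rho> *\<^sub>R One" "-(\<rho> *\<^sub>R One)"] support
    by simp
  then have minus: "((\<lambda>w. F (x - w) * ?\<phi> w) has_integral I) UNIV"
    using support by (simp add: rescale_even)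
  have average: "((\<lambda>w. (F (x + w) + F (x - w)) / 2 * ?\<phi> w) has_integral I) UNIV"
    using has_integral_mult_right[OF has_integral_add[OF plus minus], of "1 / 2"]
    by (simp add: algebra_simps add_divide_distrib)
  have "continuous_on UNIV (\<lambda>w. (F (x + w) + F (x - w)) / 2)"
    by (intro continuous_on_divide continuous_on_add cont_plus cont_minus continuous_on_const) simp
  moreover have "\<bar>(F (x + w) + F (x - w)) / 2 - F x\<bar> \<le> K" if "norm w < \<rho>" for w
    using assms(2)[OF that] by (simp add: abs_le_iff field_simps)
  ultimately have "\<bar>integral UNIV (\<lambda>w. (F (x + w) + F (x - w)) / 2 * ?\<phi> w) - F x\<bar> \<le> K"
    by (rule integral_mult_rescale_deviation)
  then show ?thesis
    using integral_unique[OF average] integral_unique[OF minus] by simp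
qed

end

lemma norm_le_of_components_le:
  fixes z :: "real^'n"
  assumes "\<And>j. \<bar>z $ j\<bar> \<le> K"
  shows "norm z \<le> real CARD('n) * K"
proof -
  have "norm z \<le> (\<Sum>j\<in>UNIV. \<bar>z $ j\<bar>)"
    by (rule norm_le_l1_cart)
  also have "\<dots> \<le> (\<Sum>j\<in>(UNIV::'n set). K)"
    by (rule sum_mono) (rule assms)
  finally show ?thesis
    by simp
qed

lemma abs_sum_mult_le:
  fixes a b :: "'n::finite \<Rightarrow> real"
  assumes "\<And>i. \<bar>a i\<bar> \<le> K" and "\<And>i. \<bar>b i\<bar> \<le> L"
  shows "\<bar>\<Sum>i\<in>UNIV. a i * b i\<bar> \<le> real CARD('n) * (K * L)"
proof -
  have "\<bar>\<Sum>i\<in>UNIV. a i * b i\<bar> \<le> (\<Sum>i\<in>UNIV. \<bar>a i * b i\<bar>)"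
    by (rule sum_abs)
  also have "\<dots> \<le> (\<Sum>i\<in>(UNIV::'n set). K * L)"
    by (rule sum_mono) (simp add: abs_mult mult_mono' assms)
  finally show ?thesis
    by simp
qed

definition second_difference_matrix :: "(real^'n \<Rightarrow> real) \<Rightarrow> real^'n \<Rightarrow> real \<Rightarrow> real^'n^'n" where
  "second_difference_matrix F x r = (\<chi> j i.
     (F (x + r *\<^sub>R axis j 1 + r *\<^sub>R axis i 1) - F (x + r *\<^sub>R axis j 1 - r *\<^sub>R axis i 1)
      - F (x - r *\<^sub>R axis j 1 + r *\<^sub>R axis i 1) + F (x - r *\<^sub>R axis j 1 - r *\<^sub>R axis i 1)) / (4 * r\<^sup>2))"

lemma transpose_second_difference_matrix:
  fixes F :: "real^'n \<Rightarrow> real"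
  shows "transpose (second_difference_matrix F x r) = second_difference_matrix F x r"
proof -
  have "x + a + b = x + b + a" "x + a - b = x - b + a" "x - a - b = x - b - a" for a b :: "real^'n"
    by (simp_all add: algebra_simps)
  then show ?thesis
    by (simp add: vec_eq_iff transpose_def second_difference_matrix_def algebra_simps)
qed

text \<open>The hypothesis \<open>second_diff\<close> is what the increment seminorm provides at scale \<open>4r\<close>.\<close>
context
  fixes F :: "real^'n \<Rightarrow> real" and Gr :: "real^'n \<Rightarrow> real^'n" and x0 :: "real^'n" and r \<epsilon> :: real
  assumes has_grad: "\<And>z. (F has_derivative (\<lambda>v. Gr z \<bullet> v)) (at z)"
    and second_diff: "\<And>a b y. dist a x0 < 4 * r \<Longrightarrow> dist b x0 < 4 * r \<Longrightarrow> norm y \<le> 4 * r \<Longrightarrow>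
           norm (Gr (a + y) - Gr a - (Gr (b + y) - Gr b)) \<le> \<epsilon>"
    and r_pos: "0 < r"
begin

lemma second_diff_bound_nonneg: "0 \<le> \<epsilon>"
  using second_diff[of x0 x0 0] r_pos by simp

lemma central_difference_estimate:
  assumes x: "dist x x0 \<le> 2 * r" and e: "norm e = 1"
  shows "\<bar>F (x + r *\<^sub>R e) - F (x - r *\<^sub>R e) - 2 * r * (Gr x \<bullet> e)\<bar> \<le> \<epsilon> * r"
proof -
  have "\<bar>F (x + r *\<^sub>R e) - F (x - r *\<^sub>R e) - 2 * r * (Gr x \<bullet> e)\<bar> \<le> \<epsilon> * norm e * r"
  proof (rule central_difference_bound[OF has_grad])
    show "0 \<le> r"
      using r_pos by simp
    fix t assume t: "t \<in> {0..r}"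
    have "norm (x - t *\<^sub>R e - x0) \<le> norm (x - x0) + norm (t *\<^sub>R e)"
      using norm_triangle_ineq4[of "x - x0" "t *\<^sub>R e"] by (simp add: algebra_simps)
    then have "dist (x - t *\<^sub>R e) x0 < 4 * r"
      using x t e r_pos by (simp add: dist_norm)
    moreover have "Gr (x + t *\<^sub>R e) + Gr (x - t *\<^sub>R e) - 2 *\<^sub>R Gr x
        = Gr (x + t *\<^sub>R e) - Gr x - (Gr ((x - t *\<^sub>R e) + t *\<^sub>R e) - Gr (x - t *\<^sub>R e))"
      by (simp add: scaleR_2 algebra_simps)
    ultimately show "norm (Gr (x + t *\<^sub>R e) + Gr (x - t *\<^sub>R e) - 2 *\<^sub>R Gr x) \<le> \<epsilon>"
      using second_diff[of x "x - t *\<^sub>R e" "t *\<^sub>R e"] x t e r_pos by (simp only:) simp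
  qed
  then show ?thesis
    using e by simp
qed

lemma mixed_difference_estimate:
  assumes e: "norm e = 1" and v: "norm v < r"
  defines "p \<equiv> x0 + r *\<^sub>R e" and "q \<equiv> x0 - r *\<^sub>R e"
  shows "\<bar>F (p + v) - F (q + v) - F p + F q - (Gr p - Gr q) \<bullet> v\<bar> \<le> \<epsilon> * r"
proof -
  have "\<bar>F (p + v) - F (q + v) - F p + F q - (Gr p - Gr q) \<bullet> v\<bar> \<le> \<epsilon> * norm v"
  proof (rule mixed_difference_bound[OF has_grad])
    fix t :: real assume t: "t \<in> {0..1}"
    have "norm (q + t *\<^sub>R v - x0) \<le> norm (q - x0) + norm (t *\<^sub>R v)"
      using norm_triangle_ineq[of "q - x0" "t *\<^sub>R v"] by (simp add: algebra_simps)
    moreover have "norm (t *\<^sub>R v) \<le> norm v"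
      using t by (simp add: mult_left_le_one_le)
    ultimately have "dist (q + t *\<^sub>R v) x0 < 4 * r"
      using e v r_pos by (simp add: q_def dist_norm)
    moreover have "norm (p - q) \<le> 4 * r"
      using e r_pos by (simp add: p_def q_def scaleR_2[symmetric])
    moreover have "q + t *\<^sub>R v + (p - q) = p + t *\<^sub>R v" "q + (p - q) = p"
      by (simp_all add: algebra_simps)
    moreover have "dist q x0 < 4 * r"
      using e r_pos by (simp add: q_def dist_norm)
    ultimately show "norm (Gr (p + t *\<^sub>R v) - Gr (q + t *\<^sub>R v) - (Gr p - Gr q)) \<le> \<epsilon>"
      using second_diff[of "q + t *\<^sub>R v" q "p - q"] by (simp only:)
  qed
  also have "\<dots> \<le> \<epsilon> * r"
    using second_diff_bound_nonneg v by (intro mult_left_mono) auto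
  finally show ?thesis .
qed

lemma second_difference_matrix_estimate:
  defines "B \<equiv> second_difference_matrix F x0 r"
  shows "\<bar>(Gr (x0 + r *\<^sub>R axis j 1) - Gr (x0 - r *\<^sub>R axis j 1)) $ i - 2 * r * B $ j $ i\<bar> \<le> \<epsilon>"
proof -
  let ?e = "\<lambda>j. axis j (1::real) :: real^'n"
  let ?p = "x0 + r *\<^sub>R ?e j" and ?q = "x0 - r *\<^sub>R ?e j"
  define Q where "Q = F (?p + r *\<^sub>R ?e i) - F (?p - r *\<^sub>R ?e i) - F (?q + r *\<^sub>R ?e i) + F (?q - r *\<^sub>R ?e i)"
  have "dist ?p x0 \<le> 2 * r" "dist ?q x0 \<le> 2 * r"
    using r_pos by (simp_all add: dist_norm)
  from central_difference_estimate[OF this(1) norm_axis_1[of i]]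
    central_difference_estimate[OF this(2) norm_axis_1[of i]]
  have "\<bar>Q - 2 * r * ((Gr ?p - Gr ?q) $ i)\<bar> \<le> 2 * (\<epsilon> * r)"
    unfolding Q_def by (simp add: inner_axis algebra_simps)
  moreover have "2 * r * B $ j $ i = Q / (2 * r)"
    using r_pos by (simp add: B_def second_difference_matrix_def Q_def power2_eq_square field_simps)
  moreover have "\<bar>Q - 2 * r * ((Gr ?p - Gr ?q) $ i)\<bar> = 2 * r * \<bar>(Gr ?p - Gr ?q) $ i - Q / (2 * r)\<bar>"
    using r_pos by (simp add: abs_mult[symmetric] field_simps abs_minus_commute)
  ultimately show ?thesis
    using r_pos by simp
qed

lemma gradient_affine_approximation_component:
  assumes x: "dist x x0 < r"
  defines "B \<equiv> second_difference_matrix F x0 r"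
  shows "\<bar>(Gr x - Gr x0 - B *v (x - x0)) $ j\<bar> \<le> (3 + real CARD('n)) * \<epsilon> / 2"
proof -
  let ?v = "x - x0" and ?e = "axis j (1::real) :: real^'n"
  let ?p = "x0 + r *\<^sub>R ?e" and ?q = "x0 - r *\<^sub>R ?e"
  have nv: "norm ?v < r"
    using x by (simp add: dist_norm)
  have "\<bar>F (x + r *\<^sub>R ?e) - F (x - r *\<^sub>R ?e) - 2 * r * (Gr x $ j)\<bar> \<le> \<epsilon> * r"
    using central_difference_estimate[of x ?e] x r_pos by (simp add: inner_axis)
  moreover have "\<bar>F ?p - F ?q - 2 * r * (Gr x0 $ j)\<bar> \<le> \<epsilon> * r"
    using central_difference_estimate[of x0 ?e] r_pos by (simp add: inner_axis)
  moreover have "?p + ?v = x + r *\<^sub>R ?e" "?q + ?v = x - r *\<^sub>R ?e"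
    by (simp_all add: algebra_simps)
  ultimately have time_free: "\<bar>2 * r * ((Gr x - Gr x0) $ j) - (Gr ?p - Gr ?q) \<bullet> ?v\<bar> \<le> 3 * (\<epsilon> * r)"
    using mixed_difference_estimate[OF norm_axis_1 nv, of j]
    unfolding vector_minus_component right_diff_distrib by (simp only:)
  have "2 * r * (B *v ?v) $ j = (\<Sum>i\<in>UNIV. 2 * r * B $ j $ i * ?v $ i)"
    by (simp add: matrix_vector_mult_def sum_distrib_left mult.assoc)
  moreover have "(Gr ?p - Gr ?q) \<bullet> ?v = (\<Sum>i\<in>UNIV. (Gr ?p - Gr ?q) $ i * ?v $ i)"
    by (simp add: inner_vec_def)
  ultimately have "\<bar>(Gr ?p - Gr ?q) \<bullet> ?v - 2 * r * (B *v ?v) $ j\<bar>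
      = \<bar>\<Sum>i\<in>UNIV. ((Gr ?p - Gr ?q) $ i - 2 * r * B $ j $ i) * ?v $ i\<bar>"
    by (simp add: sum_subtractf left_diff_distrib)
  also have "\<dots> \<le> real CARD('n) * (\<epsilon> * r)"
  proof (rule abs_sum_mult_le)
    show "\<bar>(Gr ?p - Gr ?q) $ i - 2 * r * B $ j $ i\<bar> \<le> \<epsilon>" for i
      unfolding B_def by (rule second_difference_matrix_estimate)
    show "\<bar>?v $ i\<bar> \<le> r" for i
      using component_le_norm_cart[of ?v i] nv by simp
  qed
  finally have "\<bar>2 * r * (Gr x - Gr x0 - B *v ?v) $ j\<bar> \<le> 3 * (\<epsilon> * r) + real CARD('n) * (\<epsilon> * r)"
    using time_free by (simp add: algebra_simps)
  moreover have "\<bar>2 * r * (Gr x - Gr x0 - B *v ?v) $ j\<bar> = r * (2 * \<bar>(Gr x - Gr x0 - B *v ?v) $ j\<bar>)"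
    using r_pos by (simp add: abs_mult)
  ultimately have "r * (2 * \<bar>(Gr x - Gr x0 - B *v ?v) $ j\<bar>) \<le> r * ((3 + real CARD('n)) * \<epsilon>)"
    by (simp add: algebra_simps)
  then have "2 * \<bar>(Gr x - Gr x0 - B *v ?v) $ j\<bar> \<le> (3 + real CARD('n)) * \<epsilon>"
    using r_pos by (simp only: mult_le_cancel_left_pos)
  then show ?thesis
    by linarith
qed

lemma gradient_affine_approximation:
  assumes "dist x x0 < r"
  shows "norm (Gr x - Gr x0 - second_difference_matrix F x0 r *v (x - x0))
           \<le> real CARD('n) * ((3 + real CARD('n)) * \<epsilon> / 2)"
  using gradient_affine_approximation_component[OF assms] by (rule norm_le_of_components_le)

lemma increment_symmetric_difference_estimate:
  assumes y: "norm y \<le> 2 * r" and w: "norm w < 2 * r"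
  shows "\<bar>(F (x0 + w + y) - F (x0 + w)) + (F (x0 - w + y) - F (x0 - w)) - 2 * (F (x0 + y) - F x0)\<bar>
           \<le> 2 * (\<epsilon> * r)"
proof -
  have "\<bar>(F (x0 + w + y) - F (x0 + w)) + (F (x0 - w + y) - F (x0 - w)) - 2 * (F (x0 + y) - F x0)\<bar>
      \<le> \<epsilon> * norm w"
  proof (rule symmetric_difference_bound[OF has_derivative_shift_diff[OF has_grad]])
    fix t :: real assume "t \<in> {0..1}"
    then have "norm (t *\<^sub>R w) \<le> norm w"
      by (simp add: mult_left_le_one_le)
    then have "dist (x0 + t *\<^sub>R w) x0 < 4 * r" "dist (x0 - t *\<^sub>R w) x0 < 4 * r" "norm y \<le> 4 * r"
      using w y r_pos by (simp_all add: dist_norm)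
    then show "norm (Gr (x0 + t *\<^sub>R w + y) - Gr (x0 + t *\<^sub>R w) - (Gr (x0 - t *\<^sub>R w + y) - Gr (x0 - t *\<^sub>R w))) \<le> \<epsilon>"
      by (rule second_diff)
  qed
  also have "\<dots> \<le> \<epsilon> * (2 * r)"
    using second_diff_bound_nonneg w by (intro mult_left_mono) auto
  finally show ?thesis
    by simp
qed

lemma gradient_bound_by_flatness:
  assumes flat: "\<And>y. norm y \<le> 2 * r \<Longrightarrow> \<bar>F (x0 + y) - F x0\<bar> \<le> \<eta>" and x: "dist x x0 < r"
  shows "norm (Gr x) \<le> real CARD('n) * (\<eta> / r + \<epsilon> / 2)"
proof (rule norm_le_of_components_le)
  fix j
  let ?e = "axis j (1::real) :: real^'n"
  have "norm (x + r *\<^sub>R ?e - x0) \<le> 2 * r" "norm (x - r *\<^sub>R ?e - x0) \<le> 2 * r"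
    using norm_triangle_ineq[of "x - x0" "r *\<^sub>R ?e"] norm_triangle_ineq4[of "x - x0" "r *\<^sub>R ?e"] x r_pos
    by (simp_all add: dist_norm algebra_simps)
  from this[THEN flat] have "\<bar>F (x + r *\<^sub>R ?e) - F (x - r *\<^sub>R ?e)\<bar> \<le> 2 * \<eta>"
    by simp
  moreover have "\<bar>F (x + r *\<^sub>R ?e) - F (x - r *\<^sub>R ?e) - 2 * r * (Gr x $ j)\<bar> \<le> \<epsilon> * r"
    using central_difference_estimate[of x ?e] x r_pos by (simp add: inner_axis)
  ultimately have "\<bar>2 * r * (Gr x $ j)\<bar> \<le> 2 * \<eta> + \<epsilon> * r"
    by linarith
  moreover have "2 * r * (\<eta> / r + \<epsilon> / 2) = 2 * \<eta> + \<epsilon> * r"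
    using r_pos by (simp add: field_simps)
  ultimately have "2 * r * \<bar>Gr x $ j\<bar> \<le> 2 * r * (\<eta> / r + \<epsilon> / 2)"
    using r_pos by (simp add: abs_mult)
  then show "\<bar>Gr x $ j\<bar> \<le> \<eta> / r + \<epsilon> / 2"
    using r_pos by simp
qed

end

lemma differentiable_imp_continuous_on_UNIV:
  "(\<And>x. g differentiable (at x)) \<Longrightarrow> continuous_on UNIV g"
  by (simp add: continuous_at_imp_continuous_on differentiable_imp_continuous_within)

lemma abs_diff_le_deriv_bound_between:
  fixes m :: "real \<Rightarrow> real"
  assumes "\<And>t. m differentiable (at t)"
    and "\<And>\<sigma>. min s s' \<le> \<sigma> \<Longrightarrow> \<sigma> \<le> max s s' \<Longrightarrow> \<bar>deriv m \<sigma>\<bar> \<le> K"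
  shows "\<bar>m s - m s'\<bar> \<le> K * \<bar>s - s'\<bar>"
proof -
  have "norm (m s - m s') \<le> K * norm (s - s')"
  proof (rule field_differentiable_bound[of "{min s s'..max s s'}" m "deriv m"])
    show "(m has_field_derivative deriv m z) (at z within {min s s'..max s s'})" for z
      using assms(1) DERIV_deriv_iff_real_differentiable has_field_derivative_at_within by blast
  qed (use assms(2) in auto)
  then show ?thesis
    by simp
qed

lemma moll0_sdelta_time_difference:
  assumes moll: "mollifier \<psi>" and "0 < \<rho>"
    and "continuous_on UNIV (f s)" and "continuous_on UNIV (f s')"
  shows "moll0 \<psi> \<rho> (sdelta y f) s x - moll0 \<psi> \<rho> (sdelta y f) s' x
    = integral UNIV (\<lambda>w. ((f s (x - w + y) - f s' (x - w + y)) - (f s (x - w) - f s' (x - w)))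
                          * rescale \<rho> \<psi> w)"
proof -
  have integrable: "(\<lambda>w. sdelta y f \<sigma> (x - w) * rescale \<rho> \<psi> w) integrable_on UNIV"
    if "continuous_on UNIV (f \<sigma>)" for \<sigma>
  proof (rule integrable_mult_rescale[OF moll \<open>0 < \<rho>\<close>])
    have "(\<lambda>w. sdelta y f \<sigma> (x - w)) = (\<lambda>w. f \<sigma> (x + y - w) - f \<sigma> (x - w))"
      by (simp add: sdelta_def fun_eq_iff algebra_simps)
    moreover have "continuous_on UNIV (\<lambda>w. f \<sigma> (x + y - w) - f \<sigma> (x - w))"
      using continuous_on_translate_reflect(2)[OF that] by (rule continuous_on_diff[OF _ continuous_on_translate_reflect(2)[OF that]])
    ultimately show "continuous_on UNIV (\<lambda>w. sdelta y f \<sigma> (x - w))"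
      by (simp only:)
  qed
  have "moll0 \<psi> \<rho> (sdelta y f) s x - moll0 \<psi> \<rho> (sdelta y f) s' x
      = integral UNIV (\<lambda>w. sdelta y f s (x - w) * rescale \<rho> \<psi> w - sdelta y f s' (x - w) * rescale \<rho> \<psi> w)"
    unfolding moll0_def sconv_def using integrable assms(3,4) by (simp add: integral_diff)
  then show ?thesis
    by (simp add: sdelta_def algebra_simps)
qed

lemma time_increment_flatness:
  fixes f :: "real \<Rightarrow> real^'n \<Rightarrow> real" and s s' :: real
  defines "E \<equiv> \<lambda>z. grad (f s) z - grad (f s') z"
  assumes moll: "mollifier \<psi>" and r: "0 < r" and diff: "\<And>t x. f t differentiable (at x)"
    and mdiff: "\<And>t. (\<lambda>\<sigma>. moll0 \<psi> (2 * r) (sdelta y f) \<sigma> x0) differentiable (at t)"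
    and mbound: "\<And>\<sigma>. t0 - r\<^sup>2 < \<sigma> \<Longrightarrow> \<sigma> < t0 \<Longrightarrow>
                   \<bar>deriv (\<lambda>\<sigma>. moll0 \<psi> (2 * r) (sdelta y f) \<sigma> x0) \<sigma>\<bar> \<le> K"
    and s: "t0 - r\<^sup>2 < s" "s < t0" and s': "t0 - r\<^sup>2 < s'" "s' < t0" and y: "norm y \<le> 2 * r"
    and second_diff: "\<And>a b z. dist a x0 < 4 * r \<Longrightarrow> dist b x0 < 4 * r \<Longrightarrow> norm z \<le> 4 * r \<Longrightarrow>
           norm (E (a + z) - E a - (E (b + z) - E b)) \<le> \<epsilon>"
  shows "\<bar>(f s (x0 + y) - f s' (x0 + y)) - (f s x0 - f s' x0)\<bar> \<le> r\<^sup>2 * K + \<epsilon> * r"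
proof -
  let ?m = "\<lambda>\<sigma>. moll0 \<psi> (2 * r) (sdelta y f) \<sigma> x0"
  define F where "F z = (f s (z + y) - f s' (z + y)) - (f s z - f s' z)" for z
  have has_grad_D: "((\<lambda>z. f s z - f s' z) has_derivative (\<lambda>v. E z \<bullet> v)) (at z)" for z
    using has_derivative_diff[OF has_derivative_grad[OF diff] has_derivative_grad[OF diff]]
    by (simp add: E_def inner_diff_left)
  from has_derivative_shift_diff[OF this]
  have has_grad: "(F has_derivative (\<lambda>v. (E (z + y) - E z) \<bullet> v)) (at z)" for z
    by (simp add: F_def[abs_def])
  then have "F differentiable (at z)" for z
    unfolding differentiable_def by blast
  then have cont: "continuous_on UNIV F"
    by (rule differentiable_imp_continuous_on_UNIV)
  have sym: "\<bar>F (x0 + w) + F (x0 - w) - 2 * F x0\<bar> \<le> 2 * (\<epsilon> * r)" if "norm w < 2 * r" for w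
    using increment_symmetric_difference_estimate[of "\<lambda>z. f s z - f s' z" E x0 r \<epsilon> y w,
        OF has_grad_D second_diff r y that]
    by (simp add: F_def algebra_simps)
  have "0 < 2 * r"
    using r by simp
  from integral_mult_rescale_symmetric_difference[OF moll this cont sym]
  have "\<bar>integral UNIV (\<lambda>w. F (x0 - w) * rescale (2 * r) \<psi> w) - F x0\<bar> \<le> \<epsilon> * r" .
  moreover have "integral UNIV (\<lambda>w. F (x0 - w) * rescale (2 * r) \<psi> w) = ?m s - ?m s'"
    unfolding F_def
    by (rule moll0_sdelta_time_difference[OF moll \<open>0 < 2 * r\<close>, symmetric])
       (rule differentiable_imp_continuous_on_UNIV[OF diff])+
  moreover have "\<bar>?m s - ?m s'\<bar> \<le> r\<^sup>2 * K"
  proof -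
    have "\<bar>?m s - ?m s'\<bar> \<le> K * \<bar>s - s'\<bar>"
      by (rule abs_diff_le_deriv_bound_between[OF mdiff]) (use s s' in \<open>auto intro!: mbound\<close>)
    also have "\<dots> \<le> K * r\<^sup>2"
      using s s' mbound[OF s] by (intro mult_left_mono) auto
    finally show ?thesis
      by (simp add: mult.commute)
  qed
  moreover have "F x0 = (f s (x0 + y) - f s' (x0 + y)) - (f s x0 - f s' x0)"
    by (simp add: F_def add.commute)
  ultimately show ?thesis
    by linarith
qed

lemma norm_diff_second_differences_le:
  fixes a1 a2 a3 a4 b1 b2 b3 b4 :: "'a::real_normed_vector"
  shows "norm ((a1 - b1) - (a2 - b2) - ((a3 - b3) - (a4 - b4)))
     \<le> norm (a1 - a2 - (a3 - a4)) + norm (b1 - b2 - (b3 - b4))"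
proof -
  have "(a1 - b1) - (a2 - b2) - ((a3 - b3) - (a4 - b4)) = (a1 - a2 - (a3 - a4)) - (b1 - b2 - (b3 - b4))"
    by (simp add: algebra_simps)
  then show ?thesis
    by (simp only: norm_triangle_ineq4)
qed

lemma gradient_time_increment_bound:
  fixes f :: "real \<Rightarrow> real^'n \<Rightarrow> real"
  assumes moll: "mollifier \<psi>" and r: "0 < r" and diff: "\<And>t x. f t differentiable (at x)"
    and mdiff: "\<And>y t. norm y \<le> 2 * r \<Longrightarrow> (\<lambda>\<sigma>. moll0 \<psi> (2 * r) (sdelta y f) \<sigma> x0) differentiable (at t)"
    and mbound: "\<And>y \<sigma>. norm y \<le> 2 * r \<Longrightarrow> t0 - r\<^sup>2 < \<sigma> \<Longrightarrow> \<sigma> < t0 \<Longrightarrow>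
                   \<bar>deriv (\<lambda>\<sigma>. moll0 \<psi> (2 * r) (sdelta y f) \<sigma> x0) \<sigma>\<bar> \<le> K"
    and s: "t0 - r\<^sup>2 < s" "s < t0" and s0: "t0 - r\<^sup>2 < s0" "s0 < t0"
    and second_diff: "\<And>\<sigma> a b z. \<sigma> \<in> {s, s0} \<Longrightarrow> dist a x0 < 4 * r \<Longrightarrow> dist b x0 < 4 * r \<Longrightarrow>
           norm z \<le> 4 * r \<Longrightarrow> norm (grad (f \<sigma>) (a + z) - grad (f \<sigma>) a - (grad (f \<sigma>) (b + z) - grad (f \<sigma>) b)) \<le> \<epsilon>"
    and x: "dist x x0 < r"
  shows "norm (grad (f s) x - grad (f s0) x) \<le> real CARD('n) * ((r\<^sup>2 * K + 2 * \<epsilon> * r) / r + \<epsilon>)"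
proof -
  define E where "E z = grad (f s) z - grad (f s0) z" for z
  have has_grad: "((\<lambda>z. f s z - f s0 z) has_derivative (\<lambda>v. E z \<bullet> v)) (at z)" for z
    using has_derivative_diff[OF has_derivative_grad[OF diff] has_derivative_grad[OF diff]]
    by (simp add: E_def inner_diff_left)
  have E_second_diff: "norm (E (a + z) - E a - (E (b + z) - E b)) \<le> 2 * \<epsilon>"
    if "dist a x0 < 4 * r" "dist b x0 < 4 * r" "norm z \<le> 4 * r" for a b z
    using norm_diff_second_differences_le[of "grad (f s) (a + z)" "grad (f s0) (a + z)" "grad (f s) a"
        "grad (f s0) a" "grad (f s) (b + z)" "grad (f s0) (b + z)" "grad (f s) b" "grad (f s0) b"]
      second_diff[OF insertI1 that] second_diff[OF insertI2[OF singletonI] that]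
    unfolding E_def by linarith
  have "\<bar>(f s (x0 + y) - f s0 (x0 + y)) - (f s x0 - f s0 x0)\<bar> \<le> r\<^sup>2 * K + 2 * \<epsilon> * r"
    if y: "norm y \<le> 2 * r" for y
    using time_increment_flatness[OF moll r diff mdiff[OF y] mbound[OF y] s s0 y E_second_diff[unfolded E_def]]
    by (simp add: mult.assoc)
  from gradient_bound_by_flatness[OF has_grad E_second_diff r this x]
  show ?thesis
    by (simp add: E_def)
qed

lemma powr_scaling_bounds:
  fixes r \<alpha> :: real
  assumes r: "0 < r" and "\<alpha> < 1"
  shows "(4 * r) powr (2 * \<alpha>) \<le> 16 * r powr (2 * \<alpha>)"
    and "r / (2 * r) powr (1 - 2 * \<alpha>) \<le> 2 * r powr (2 * \<alpha>)"
proof -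
  have "4 powr (2 * \<alpha>) \<le> (4::real) powr 2"
    using assms by (intro powr_mono) auto
  then show "(4 * r) powr (2 * \<alpha>) \<le> 16 * r powr (2 * \<alpha>)"
    using r by (simp add: powr_mult powr_numeral mult_right_mono)
  have "(2::real) powr (2 * \<alpha> - 1) \<le> 2 powr 1"
    using assms by (intro powr_mono) auto
  moreover have "r / (2 * r) powr (1 - 2 * \<alpha>) = 2 powr (2 * \<alpha> - 1) * r powr (2 * \<alpha>)"
  proof -
    have "2 powr (2 * \<alpha> - 1) * r powr (2 * \<alpha>) * (2 * r) powr (1 - 2 * \<alpha>)
        = (2 powr (2 * \<alpha> - 1) * 2 powr (1 - 2 * \<alpha>)) * (r powr (2 * \<alpha>) * r powr (1 - 2 * \<alpha>))"
      using r by (simp add: powr_mult mult_ac)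
    also have "\<dots> = r"
      using r by (simp add: powr_add[symmetric])
    finally show ?thesis
      using r by (simp add: field_simps)
  qed
  ultimately show "r / (2 * r) powr (1 - 2 * \<alpha>) \<le> 2 * r powr (2 * \<alpha>)"
    by (simp add: mult_right_mono)
qed

lemma affine_error_arith:
  fixes r \<alpha> A0 A1 d :: real
  assumes r: "0 < r" and \<alpha>: "\<alpha> < 1" and A0: "0 \<le> A0" and A1: "0 \<le> A1" and d: "0 \<le> d"
  defines "\<epsilon> \<equiv> 2 * A1 * (4 * r) powr (2 * \<alpha>)" and "P \<equiv> r powr (2 * \<alpha>)"
  shows "d * ((r\<^sup>2 * (A0 / (2 * r) powr (1 - 2 * \<alpha>)) + 2 * \<epsilon> * r) / r + \<epsilon>) + d * ((3 + d) * \<epsilon> / 2)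
       \<le> 16 * d * (d + 9) * (A0 + A1) * P"
proof -
  have "A1 * (4 * r) powr (2 * \<alpha>) \<le> A1 * (16 * P)"
    unfolding P_def by (rule mult_left_mono[OF powr_scaling_bounds(1)[OF r \<alpha>] A1])
  then have \<epsilon>: "\<epsilon> \<le> 32 * A1 * P"
    unfolding \<epsilon>_def by simp
  have "(r\<^sup>2 * (A0 / (2 * r) powr (1 - 2 * \<alpha>)) + 2 * \<epsilon> * r) / r
      = A0 * (r / (2 * r) powr (1 - 2 * \<alpha>)) + 2 * \<epsilon>"
    using r by (simp add: power2_eq_square field_simps)
  also have "\<dots> \<le> A0 * (2 * P) + 2 * \<epsilon>"
    unfolding P_def by (intro add_right_mono mult_left_mono[OF powr_scaling_bounds(2)[OF r \<alpha>] A0])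
  finally have "d * ((r\<^sup>2 * (A0 / (2 * r) powr (1 - 2 * \<alpha>)) + 2 * \<epsilon> * r) / r + \<epsilon>) + d * ((3 + d) * \<epsilon> / 2)
      \<le> d * (A0 * (2 * P) + 2 * \<epsilon> + \<epsilon>) + d * ((3 + d) * \<epsilon> / 2)"
    using d by (simp add: mult_left_mono)
  also have "\<dots> = 2 * d * A0 * P + d * (9 + d) / 2 * \<epsilon>"
    by (simp add: field_simps)
  also have "\<dots> \<le> 2 * d * A0 * P + d * (9 + d) / 2 * (32 * A1 * P)"
    using mult_left_mono[OF \<epsilon>, of "d * (9 + d) / 2"] d by simp
  also have "\<dots> \<le> 16 * d * (d + 9) * (A0 + A1) * P"
  proof -
    have "0 \<le> d * A0 * P"
      using d A0 by (simp add: P_def)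
    then have "2 * (d * A0 * P) \<le> (16 * (d + 9)) * (d * A0 * P)"
      using d by (intro mult_right_mono) auto
    then show ?thesis
      by (simp add: algebra_simps)
  qed
  finally show ?thesis .
qed

lemma affine_approximation_at_scale:
  fixes f :: "real \<Rightarrow> real^'n \<Rightarrow> real"
  assumes moll: "mollifier \<psi>" and r: "0 < r" and \<alpha>: "\<alpha> < 1" and A0: "0 \<le> A0" and A1: "0 \<le> A1"
    and diff: "\<And>t x. f t differentiable (at x)"
    and second_diff: "\<And>l \<sigma> a b y. 0 < l \<Longrightarrow> t0 - l\<^sup>2 < \<sigma> \<Longrightarrow> \<sigma> < t0 \<Longrightarrow> dist a x0 < l \<Longrightarrow>
           dist b x0 < l \<Longrightarrow> norm y \<le> l \<Longrightarrow>
           norm (grad (f \<sigma>) (a + y) - grad (f \<sigma>) a - (grad (f \<sigma>) (b + y) - grad (f \<sigma>) b)) \<le> 2 * A1 * l powr (2 * \<alpha>)"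
    and mdiff: "\<And>\<rho> y t. 0 < \<rho> \<Longrightarrow> norm y \<le> \<rho> \<Longrightarrow> (\<lambda>s. moll0 \<psi> \<rho> (sdelta y f) s x0) differentiable (at t)"
    and time_deriv: "\<And>\<rho> y \<sigma>. 0 < \<rho> \<Longrightarrow> norm y \<le> \<rho> \<Longrightarrow> t0 - \<rho>\<^sup>2 < \<sigma> \<Longrightarrow> \<sigma> < t0 \<Longrightarrow>
           \<bar>deriv (\<lambda>s. moll0 \<psi> \<rho> (sdelta y f) s x0) \<sigma>\<bar> \<le> A0 / \<rho> powr (1 - 2 * \<alpha>)"
  shows "\<exists>B b. transpose B = B \<and> (\<forall>s x. t0 - r\<^sup>2 < s \<longrightarrow> s < t0 \<longrightarrow> dist x x0 < r \<longrightarrow>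
     norm (grad (f s) x - (B *v (x - x0) + b))
       \<le> 16 * real CARD('n) * (real CARD('n) + 9) * (A0 + A1) * r powr (2 * \<alpha>))"
proof -
  let ?G = "\<lambda>\<sigma>. grad (f \<sigma>)" and ?d = "real CARD('n)"
  define \<epsilon> where "\<epsilon> = 2 * A1 * (4 * r) powr (2 * \<alpha>)"
  define K where "K = A0 / (2 * r) powr (1 - 2 * \<alpha>)"
  define s0 where "s0 = t0 - r\<^sup>2 / 2"
  have s0: "t0 - r\<^sup>2 < s0" "s0 < t0"
    unfolding s0_def using r by auto
  have in_larger_cylinder: "t0 - (c * r)\<^sup>2 < \<sigma>" if "t0 - r\<^sup>2 < \<sigma>" "1 \<le> c" for c \<sigma>
  proof -
    have "r\<^sup>2 \<le> (c * r)\<^sup>2"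
      using r that(2) by (simp add: power_mono)
    then show ?thesis
      using that(1) by linarith
  qed
  have second_diff_4r: "norm (?G \<sigma> (a + y) - ?G \<sigma> a - (?G \<sigma> (b + y) - ?G \<sigma> b)) \<le> \<epsilon>"
    if "t0 - r\<^sup>2 < \<sigma>" "\<sigma> < t0" "dist a x0 < 4 * r" "dist b x0 < 4 * r" "norm y \<le> 4 * r" for \<sigma> a b y
    using second_diff[OF _ in_larger_cylinder[OF that(1), of 4] that(2-5)] r unfolding \<epsilon>_def by simp
  define B where "B = second_difference_matrix (f s0) x0 r"
  define b where "b = ?G s0 x0"
  have "norm (?G s x - (B *v (x - x0) + b))
      \<le> 16 * ?d * (?d + 9) * (A0 + A1) * r powr (2 * \<alpha>)"
    if s: "t0 - r\<^sup>2 < s" "s < t0" and x: "dist x x0 < r" for s x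
  proof -
    have "norm (?G s x - ?G s0 x) \<le> ?d * ((r\<^sup>2 * K + 2 * \<epsilon> * r) / r + \<epsilon>)"
    proof (rule gradient_time_increment_bound[OF moll r diff _ _ s s0 _ x])
      have "0 < 2 * r"
        using r by simp
      then show "(\<lambda>\<sigma>. moll0 \<psi> (2 * r) (sdelta y f) \<sigma> x0) differentiable (at t)" if "norm y \<le> 2 * r" for y t
        using mdiff that by blast
      show "\<bar>deriv (\<lambda>\<sigma>. moll0 \<psi> (2 * r) (sdelta y f) \<sigma> x0) \<sigma>\<bar> \<le> K"
        if "norm y \<le> 2 * r" "t0 - r\<^sup>2 < \<sigma>" "\<sigma> < t0" for y \<sigma>
        using time_deriv[OF \<open>0 < 2 * r\<close> that(1) in_larger_cylinder[OF that(2), of 2] that(3)]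
        unfolding K_def by simp
      show "norm (?G \<sigma> (a + z) - ?G \<sigma> a - (?G \<sigma> (b + z) - ?G \<sigma> b)) \<le> \<epsilon>"
        if "\<sigma> \<in> {s, s0}" "dist a x0 < 4 * r" "dist b x0 < 4 * r" "norm z \<le> 4 * r" for \<sigma> a b z
        using that s s0 second_diff_4r by blast
    qed
    moreover have "norm (?G s0 x - ?G s0 x0 - B *v (x - x0)) \<le> ?d * ((3 + ?d) * \<epsilon> / 2)"
      unfolding B_def
      by (rule gradient_affine_approximation[OF has_derivative_grad[OF diff] second_diff_4r[OF s0] r x])
    moreover have "?G s x - (B *v (x - x0) + b) = (?G s x - ?G s0 x) + (?G s0 x - ?G s0 x0 - B *v (x - x0))"
      by (simp add: b_def algebra_simps)
    ultimately have "norm (?G s x - (B *v (x - x0) + b)) \<le> ?d * ((r\<^sup>2 * K + 2 * \<epsilon> * r) / r + \<epsilon>) + ?d * ((3 + ?d) * \<epsilon> / 2)"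
      by (smt (verit) norm_triangle_ineq)
    also have "\<dots> \<le> 16 * ?d * (?d + 9) * (A0 + A1) * r powr (2 * \<alpha>)"
      unfolding K_def \<epsilon>_def by (rule affine_error_arith[OF r \<alpha> A0 A1]) simp
    finally show ?thesis .
  qed
  moreover have "transpose B = B"
    unfolding B_def by (rule transpose_second_difference_matrix)
  ultimately show ?thesis
    by blast
qed

definition affine_campanato_seminorm :: "real \<Rightarrow> (real \<Rightarrow> real^'n \<Rightarrow> real) \<Rightarrow> real \<Rightarrow> real^'n \<Rightarrow> ereal" where
  "affine_campanato_seminorm \<alpha> f t0 x0 = (SUP r\<in>{0<..}. ereal (1 / r powr (2 * \<alpha>)) *
     (INF Bb\<in>{(B :: real^'n^'n, b :: real^'n). transpose B = B}.
        supn (\<lambda>(s, x). grad (f s) x - (fst Bb *v (x - x0) + snd Bb)) (Pcyl r (t0, x0))))"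

definition increment_gradient_seminorm :: "real \<Rightarrow> (real \<Rightarrow> real^'n \<Rightarrow> real) \<Rightarrow> real \<Rightarrow> real^'n \<Rightarrow> ereal" where
  "increment_gradient_seminorm \<alpha> f t0 x0 = (SUP l\<in>{0<..}. ereal (1 / l powr (2 * \<alpha>)) *
     (SUP y\<in>{y. norm y \<le> l}. INF k\<in>UNIV. supn (\<lambda>(s, x). grad (sdelta y f s) x - k) (Pcyl l (t0, x0))))"

definition mollified_time_derivative_seminorm ::
    "real \<Rightarrow> (real^'n \<Rightarrow> real) \<Rightarrow> (real \<Rightarrow> real^'n \<Rightarrow> real) \<Rightarrow> real \<Rightarrow> real^'n \<Rightarrow> ereal" where
  "mollified_time_derivative_seminorm \<alpha> \<phi> f t0 x0 = (SUP r\<in>{0<..}. ereal (r powr (1 - 2 * \<alpha>)) *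
     (SUP y\<in>{y. norm y \<le> r}.
        supn (\<lambda>(s, x). deriv (\<lambda>s'. sconv (sdelta y f) (rescale r \<phi>) s' x) s) (Pcyl r (t0, x0))))"

lemma mem_Pcyl_iff: "(s, x) \<in> Pcyl l (t0, x0) \<longleftrightarrow> t0 - l\<^sup>2 < s \<and> s < t0 \<and> dist x x0 < l"
  by (simp add: Pcyl_def)

lemma supn_ge: "p \<in> S \<Longrightarrow> ereal (norm (g p)) \<le> supn g S"
  unfolding supn_def by (rule SUP_upper)

lemma supn_nonneg:
  assumes "p \<in> S"
  shows "0 \<le> supn g S"
proof -
  have "0 \<le> ereal (norm (g p))"
    by simp
  also have "\<dots> \<le> supn g S"
    by (rule supn_ge[OF assms])
  finally show ?thesis .
qed

lemma supn_le: "(\<And>p. p \<in> S \<Longrightarrow> norm (g p) \<le> c) \<Longrightarrow> supn g S \<le> ereal c"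
  unfolding supn_def by (rule SUP_least) simp

lemma scaled_SUP_nonneg:
  assumes "w 1 = 1" and "0 \<le> S 1 0"
  shows "0 \<le> (SUP r\<in>{0<..}. ereal (w r) * (SUP y\<in>{y::'a::real_normed_vector. norm y \<le> r}. S r y))"
proof (rule SUP_upper2[of 1])
  have "S 1 0 \<le> (SUP y\<in>{y::'a. norm y \<le> 1}. S 1 y)"
    by (rule SUP_upper) simp
  with assms show "0 \<le> ereal (w 1) * (SUP y\<in>{y::'a. norm y \<le> 1}. S 1 y)"
    by simp
qed simp

lemma ereal_le_divide_if_mult_le:
  assumes "0 < a" and "ereal a * X \<le> ereal b"
  shows "X \<le> ereal (b / a)"
proof (cases X)
  case (real x)
  then show ?thesis
    using assms by (simp add: pos_le_divide_eq mult.commute)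
qed (use assms in simp_all)

lemma scaled_SUP_le_imp:
  assumes "(SUP r\<in>{0<..}. ereal (w r) * (SUP y\<in>{y::'a::real_normed_vector. norm y \<le> r}. S r y)) \<le> ereal A"
    and "0 < r" and "norm y \<le> r" and w: "0 < w r"
  shows "S r y \<le> ereal (A / w r)"
proof (rule ereal_le_divide_if_mult_le[OF w])
  have "ereal (w r) * S r y \<le> ereal (w r) * (SUP y\<in>{y. norm y \<le> r}. S r y)"
    by (rule ereal_mult_left_mono[OF SUP_upper]) (use assms(3) w in simp_all)
  also have "\<dots> \<le> (SUP r\<in>{0<..}. ereal (w r) * (SUP y\<in>{y. norm y \<le> r}. S r y))"
    by (rule SUP_upper) (use assms(2) in simp)
  also have "\<dots> \<le> ereal A"
    by (rule assms(1))
  finally show "ereal (w r) * S r y \<le> ereal A" .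
qed

lemma increment_gradient_seminorm_nonneg: "0 \<le> increment_gradient_seminorm \<alpha> f t0 x0"
  unfolding increment_gradient_seminorm_def
proof (rule scaled_SUP_nonneg)
  have "(t0 - 1 / 2, x0) \<in> Pcyl 1 (t0, x0)"
    by (simp add: Pcyl_def)
  then show "0 \<le> (INF k\<in>UNIV. supn (\<lambda>(s, x). grad (sdelta 0 f s) x - k) (Pcyl 1 (t0, x0)))"
    by (intro INF_greatest supn_nonneg)
qed simp

lemma mollified_time_derivative_seminorm_nonneg: "0 \<le> mollified_time_derivative_seminorm \<alpha> \<phi> f t0 x0"
  unfolding mollified_time_derivative_seminorm_def
proof (rule scaled_SUP_nonneg)
  have "(t0 - 1 / 2, x0) \<in> Pcyl 1 (t0, x0)"
    by (simp add: Pcyl_def)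
  then show "0 \<le> supn (\<lambda>(s, x). deriv (\<lambda>s'. sconv (sdelta 0 f) (rescale 1 \<phi>) s' x) s) (Pcyl 1 (t0, x0))"
    by (rule supn_nonneg)
qed simp

text \<open>Two competitors \<open>k\<close> for \<open>\<nabla>\<delta>\<^sub>yf\<close> at the points \<open>a\<close> and \<open>b\<close> give the factor 2.\<close>
lemma second_difference_le_increment_gradient_seminorm:
  fixes f :: "real \<Rightarrow> real^'n \<Rightarrow> real"
  assumes diff: "\<And>t x. f t differentiable (at x)"
    and bound: "increment_gradient_seminorm \<alpha> f t0 x0 \<le> ereal A1"
    and l: "0 < l" and \<sigma>: "t0 - l\<^sup>2 < \<sigma>" "\<sigma> < t0" and a: "dist a x0 < l" and b: "dist b x0 < l"
    and y: "norm y \<le> l"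
  shows "norm (grad (f \<sigma>) (a + y) - grad (f \<sigma>) a - (grad (f \<sigma>) (b + y) - grad (f \<sigma>) b)) \<le> 2 * A1 * l powr (2 * \<alpha>)"
proof (rule field_le_epsilon)
  fix e :: real assume e: "0 < e"
  let ?g = "\<lambda>k (s, x). grad (sdelta y f s) x - k"
  have "(INF k\<in>UNIV. supn (?g k) (Pcyl l (t0, x0))) \<le> ereal (A1 * l powr (2 * \<alpha>))"
    using scaled_SUP_le_imp[OF bound[unfolded increment_gradient_seminorm_def] l y] l by simp
  also have "\<dots> < ereal (A1 * l powr (2 * \<alpha>) + e / 2)"
    using e by simp
  finally obtain k where k: "supn (?g k) (Pcyl l (t0, x0)) < ereal (A1 * l powr (2 * \<alpha>) + e / 2)"
    unfolding INF_less_iff by blast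
  have near_k: "norm (grad (sdelta y f \<sigma>) p - k) < A1 * l powr (2 * \<alpha>) + e / 2" if "dist p x0 < l" for p
    using le_less_trans[OF supn_ge[of "(\<sigma>, p)" _ "?g k"] k] that \<sigma> by (simp add: mem_Pcyl_iff)
  have "norm (grad (sdelta y f \<sigma>) a - grad (sdelta y f \<sigma>) b)
      \<le> norm (grad (sdelta y f \<sigma>) a - k) + norm (grad (sdelta y f \<sigma>) b - k)"
    using norm_triangle_ineq4[of "grad (sdelta y f \<sigma>) a - k" "grad (sdelta y f \<sigma>) b - k"] by simp
  then show "norm (grad (f \<sigma>) (a + y) - grad (f \<sigma>) a - (grad (f \<sigma>) (b + y) - grad (f \<sigma>) b))
      \<le> 2 * A1 * l powr (2 * \<alpha>) + e"
    using near_k[OF a] near_k[OF b] by (simp add: grad_sdelta diff)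
qed

lemma time_derivative_le_mollified_time_derivative_seminorm:
  assumes bound: "mollified_time_derivative_seminorm \<alpha> \<psi> f t0 x0 \<le> ereal A0"
    and \<rho>: "0 < \<rho>" and y: "norm y \<le> \<rho>" and \<sigma>: "t0 - \<rho>\<^sup>2 < \<sigma>" "\<sigma> < t0"
  shows "\<bar>deriv (\<lambda>s. moll0 \<psi> \<rho> (sdelta y f) s x0) \<sigma>\<bar> \<le> A0 / \<rho> powr (1 - 2 * \<alpha>)"
proof -
  have "ereal \<bar>deriv (\<lambda>s. moll0 \<psi> \<rho> (sdelta y f) s x0) \<sigma>\<bar>
      \<le> supn (\<lambda>(s, x). deriv (\<lambda>s'. sconv (sdelta y f) (rescale \<rho> \<psi>) s' x) s) (Pcyl \<rho> (t0, x0))"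
    using supn_ge[of "(\<sigma>, x0)" "Pcyl \<rho> (t0, x0)" "\<lambda>(s, x). deriv (\<lambda>s'. sconv (sdelta y f) (rescale \<rho> \<psi>) s' x) s"]
      \<sigma> \<rho> by (simp add: mem_Pcyl_iff moll0_def)
  also have "\<dots> \<le> ereal (A0 / \<rho> powr (1 - 2 * \<alpha>))"
    using scaled_SUP_le_imp[OF bound[unfolded mollified_time_derivative_seminorm_def] \<rho> y] \<rho> by simp
  finally show ?thesis
    by simp
qed

lemma affine_campanato_seminorm_le:
  fixes f :: "real \<Rightarrow> real^'n \<Rightarrow> real"
  assumes moll: "mollifier \<psi>" and \<alpha>: "\<alpha> < 1" and A0: "0 \<le> A0" and A1: "0 \<le> A1"
    and diff: "\<And>t x. f t differentiable (at x)"
    and mdiff: "\<And>\<rho> y t. 0 < \<rho> \<Longrightarrow> norm y \<le> \<rho> \<Longrightarrow> (\<lambda>s. moll0 \<psi> \<rho> (sdelta y f) s x0) differentiable (at t)"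
    and increment: "increment_gradient_seminorm \<alpha> f t0 x0 \<le> ereal A1"
    and time: "mollified_time_derivative_seminorm \<alpha> \<psi> f t0 x0 \<le> ereal A0"
  shows "affine_campanato_seminorm \<alpha> f t0 x0
           \<le> ereal (16 * real CARD('n) * (real CARD('n) + 9) * (A0 + A1))"
  unfolding affine_campanato_seminorm_def
proof (rule SUP_least)
  fix r :: real assume "r \<in> {0<..}"
  then have r: "0 < r"
    by simp
  define C where "C = 16 * real CARD('n) * (real CARD('n) + 9) * (A0 + A1)"
  obtain B b where sym: "transpose B = B"
    and approx: "\<And>s x. t0 - r\<^sup>2 < s \<Longrightarrow> s < t0 \<Longrightarrow> dist x x0 < r \<Longrightarrow>
                   norm (grad (f s) x - (B *v (x - x0) + b)) \<le> C * r powr (2 * \<alpha>)"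
    using affine_approximation_at_scale[OF moll r \<alpha> A0 A1 diff
        second_difference_le_increment_gradient_seminorm[OF diff increment] mdiff
        time_derivative_le_mollified_time_derivative_seminorm[OF time]]
    unfolding C_def by blast
  have "(INF Bb\<in>{(B, b). transpose B = B}.
          supn (\<lambda>(s, x). grad (f s) x - (fst Bb *v (x - x0) + snd Bb)) (Pcyl r (t0, x0)))
      \<le> supn (\<lambda>(s, x). grad (f s) x - (B *v (x - x0) + b)) (Pcyl r (t0, x0))"
    using sym by (intro INF_lower2[of "(B, b)"]) auto
  also have "\<dots> \<le> ereal (C * r powr (2 * \<alpha>))"
    by (rule supn_le) (auto simp: mem_Pcyl_iff Pcyl_def intro: approx)
  finally have "ereal (1 / r powr (2 * \<alpha>)) * (INF Bb\<in>{(B, b). transpose B = B}.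
          supn (\<lambda>(s, x). grad (f s) x - (fst Bb *v (x - x0) + snd Bb)) (Pcyl r (t0, x0)))
      \<le> ereal (1 / r powr (2 * \<alpha>)) * ereal (C * r powr (2 * \<alpha>))"
    by (rule ereal_mult_left_mono) simp
  then show "ereal (1 / r powr (2 * \<alpha>)) * (INF Bb\<in>{(B, b). transpose B = B}.
          supn (\<lambda>(s, x). grad (f s) x - (fst Bb *v (x - x0) + snd Bb)) (Pcyl r (t0, x0)))
      \<le> ereal (16 * real CARD('n) * (real CARD('n) + 9) * (A0 + A1))"
    using r by (simp add: C_def)
qed

text \<open>Infinite seminorms on the right make the estimate trivial, since \<open>C > 0\<close>.\<close>
lemma ereal_le_mult_add_if_finite:
  fixes L T1 T0 T :: ereal
  assumes C: "0 < C" and "0 \<le> T1" and "0 \<le> T0" and "0 \<le> T"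
    and finite: "\<And>A1 A0. T1 = ereal A1 \<Longrightarrow> T0 = ereal A0 \<Longrightarrow> 0 \<le> A1 \<Longrightarrow> 0 \<le> A0 \<Longrightarrow> L \<le> ereal (C * (A0 + A1))"
  shows "L \<le> ereal C * (T1 + T0 + T)"
proof (cases "T1 = \<infinity> \<or> T0 = \<infinity>")
  case True
  then show ?thesis
    using assms(1-4) by auto
next
  case False
  then obtain A1 A0 where A1: "T1 = ereal A1" and A0: "T0 = ereal A0"
    using assms(2,3) by (cases T1; cases T0) auto
  have "L \<le> ereal (C * (A0 + A1))"
    by (rule finite[OF A1 A0]) (use A1 A0 assms(2,3) in auto)
  also have "\<dots> = ereal C * (T1 + T0)"
    by (simp add: A1 A0 algebra_simps)
  also have "\<dots> \<le> ereal C * (T1 + T0 + T)"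
    using C by (intro ereal_mult_left_mono add_increasing2[OF assms(4) order_refl]) simp
  finally show ?thesis .
qed

lemma affine_campanato_estimate:
  fixes f :: "real \<Rightarrow> real^'n \<Rightarrow> real"
  assumes moll: "mollifier \<psi>" and \<alpha>: "\<alpha> < 1"
    and diff: "\<And>t x. f t differentiable (at x)"
    and mdiff: "\<And>\<rho> y t. 0 < \<rho> \<Longrightarrow> norm y \<le> \<rho> \<Longrightarrow> (\<lambda>s. moll0 \<psi> \<rho> (sdelta y f) s x0) differentiable (at t)"
  shows "affine_campanato_seminorm \<alpha> f t0 x0
    \<le> ereal (16 * real CARD('n) * (real CARD('n) + 9)) *
        (increment_gradient_seminorm \<alpha> f t0 x0 + mollified_time_derivative_seminorm \<alpha> \<psi> f t0 x0
         + (\<Sum>i\<in>UNIV. mollified_time_derivative_seminorm \<alpha> (pder \<psi> i) f t0 x0))"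
proof (rule ereal_le_mult_add_if_finite)
  fix A1 A0 assume "increment_gradient_seminorm \<alpha> f t0 x0 = ereal A1"
    and "mollified_time_derivative_seminorm \<alpha> \<psi> f t0 x0 = ereal A0" and "0 \<le> A1" "0 \<le> A0"
  with affine_campanato_seminorm_le[OF moll \<alpha> _ _ diff mdiff]
  show "affine_campanato_seminorm \<alpha> f t0 x0 \<le> ereal (16 * real CARD('n) * (real CARD('n) + 9) * (A0 + A1))"
    by simp
qed (simp_all add: sum_nonneg increment_gradient_seminorm_nonneg mollified_time_derivative_seminorm_nonneg)

theorem corollary1:
  fixes \<psi> :: "real^'n \<Rightarrow> real" and \<alpha> :: real
  assumes "mollifier \<psi>" and "1/2 < \<alpha>" and "\<alpha> < 1"
  shows "\<exists>C>0. \<forall>(f :: real \<Rightarrow> real^'n \<Rightarrow> real) (t0 :: real) (x0 :: real^'n).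
    (\<forall>t x. f t differentiable (at x))
    \<longrightarrow> (\<exists>M. \<forall>t x s y. norm (grad (f t) x - grad (f s) y)
                       \<le> M * pdist (t, x) (s, y) powr \<alpha>)
    \<longrightarrow> (\<forall>r>0. \<forall>y. norm y \<le> r \<longrightarrow> (\<forall>t x.
           (\<lambda>s. moll0 \<psi> r (sdelta y f) s x) differentiable (at t)
           \<and> (\<forall>i. (\<lambda>s. molli \<psi> i r (sdelta y f) s x) differentiable (at t))))
    \<longrightarrow> (SUP r\<in>{0<..}. ereal (1 / r powr (2 * \<alpha>)) *
          (INF Bb\<in>{(B :: real^'n^'n, b :: real^'n). transpose B = B}.
             supn (\<lambda>(s, x). grad (f s) x - (fst Bb *v (x - x0) + snd Bb)) (Pcyl r (t0, x0))))
        \<le> ereal C *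
          ((SUP l\<in>{0<..}. ereal (1 / l powr (2 * \<alpha>)) *
              (SUP y\<in>{y. norm y \<le> l}. INF k\<in>(UNIV :: (real^'n) set).
                 supn (\<lambda>(s, x). grad (sdelta y f s) x - k) (Pcyl l (t0, x0))))
           + (SUP r\<in>{0<..}. ereal (r powr (1 - 2 * \<alpha>)) *
              (SUP y\<in>{y. norm y \<le> r}.
                 supn (\<lambda>(s, x). deriv (\<lambda>s'. moll0 \<psi> r (sdelta y f) s' x) s) (Pcyl r (t0, x0))))
           + (\<Sum>i\<in>(UNIV :: 'n set). SUP r\<in>{0<..}. ereal (r powr (1 - 2 * \<alpha>)) *
              (SUP y\<in>{y. norm y \<le> r}.
                 supn (\<lambda>(s, x). deriv (\<lambda>s'. molli \<psi> i r (sdelta y f) s' x) s) (Pcyl r (t0, x0)))))"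
proof (intro exI[of _ "16 * real CARD('n) * (real CARD('n) + 9)"] conjI allI impI, goal_cases)
  case 1
  show ?case
    by simp
next
  case (2 f t0 x0)
  then have "\<And>t x. f t differentiable (at x)"
    and "\<And>\<rho> y t. 0 < \<rho> \<Longrightarrow> norm y \<le> \<rho> \<Longrightarrow> (\<lambda>s. moll0 \<psi> \<rho> (sdelta y f) s x0) differentiable (at t)"
    by blast+
  from affine_campanato_estimate[OF assms(1,3) this] show ?case
    by (simp add: affine_campanato_seminorm_def increment_gradient_seminorm_def
        mollified_time_derivative_seminorm_def moll0_def molli_def)
qed

end
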